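(* Let a stabilizer code $H$ be phantom with respect to the logical basis $(Q_X,Q_Z)$. Then for every weight vector $\mathbf w\in\mathbb Z_{\ge0}^3$, the number $\#\{v\in cQ_X+\mathrm{rs}(H):\ \mathbf w(v)=\mathbf w\}$ is the same for all $c\in\mathbb F_2^k\setminus\{0\}$. The same holds with $Q_X$ replaced by $Q_Z$.
   Context: Conventions: arithmetic over $\mathbb F_2$; vectors are row vectors; $\mathrm{rs}(M)$ is the row space of $M$; $E_{ab}\in\mathbb F_2^{k\times k}$ is the matrix unit with a single $1$ in position $(a,b)$; $A^{-T}=(A^{-1})^T$; $\Omega=\begin{pmatrix}0&I_n\\ I_n&0\end{pmatrix}$. A stabilizer code on $n$ qubits is given by a full-row-rank $H\in\mathbb F_2^{r\times 2n}$ with $H\Omega H^T=0$; $k=n-r$. A vector $(x|z)\in\mathbb F_2^{2n}$ represents the Pauli operator $\prod_iX_i^{x_i}Z_i^{z_i}$ up to phase. A logical basis is a pair $Q_X,Q_Z\in\mathbb F_2^{k\times 2n}$ with $H\Omega Q_X^T=0$, $H\Omega Q_Z^T=0$, $Q_X\Omega Q_X^T=0$, $Q_Z\Omega Q_Z^T=0$, $Q_X\Omega Q_Z^T=I_k$. A qubit permutation $\pi\in S_n$ with permutation matrix $P$ acts by $(x|z)\mapsto(xP|zP)$, i.e. right multiplication by $P\oplus P=\mathrm{diag}(P,P)$. For $A\in GL(k,\mathbb F_2)$, $\pi$ implements the logical CNOT circuit $A$ in the basis $(Q_X,Q_Z)$ if $\mathrm{rs}(H(P\oplus P))=\mathrm{rs}(H)$,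 every row of $Q_X(P\oplus P)-AQ_X$ lies in $\mathrm{rs}(H)$, and every row of $Q_Z(P\oplus P)-A^{-T}Q_Z$ lies in $\mathrm{rs}(H)$. The logical $\mathrm{CNOT}_{ab}$ ($a\neq b$) corresponds to $A=I_k+E_{ab}$. The stabilizer code is phantom with respect to $(Q_X,Q_Z)$ if for every ordered pair $(a,b)\in[k]^2$ with $a\ne b$ some permutation implements $I_k+E_{ab}$ in that basis; it is phantom if it is phantom with respect to some logical basis. The weight vector of $v=(x|z)$ is $\mathbf w(v)=(w_X,w_Z,w_Y)$ with $w_X=\#\{i:x_i=1,z_i=0\}$, $w_Z=\#\{i:x_i=0,z_i=1\}$, $w_Y=\#\{i:x_i=z_i=1\}$. *)

theory Defs
  imports "Jordan_Normal_Form.Matrix" "HOL-Library.Z2" "HOL-Combinatorics.Permutations"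
begin

(* Arithmetic over F_2 = type bit.  A JNF vector "'a vec" plays the role of a row vector:
   the row vector x M (for x of dimension dim_row M) is  transpose_mat M *\<^sub>v x. *)

definition Omega :: "nat \<Rightarrow> bit mat" where
  "Omega n = four_block_mat (0\<^sub>m n n) (1\<^sub>m n) (1\<^sub>m n) (0\<^sub>m n n)"

definition rs :: "bit mat \<Rightarrow> bit vec set" where
  "rs M = {v. \<exists>c. dim_vec c = dim_row M \<and> v = transpose_mat M *\<^sub>v c}"

definition full_row_rank :: "bit mat \<Rightarrow> bool" where
  "full_row_rank M \<longleftrightarrow>
     (\<forall>c. dim_vec c = dim_row M \<longrightarrow> transpose_mat M *\<^sub>v c = 0\<^sub>v (dim_col M) \<longrightarrow> c = 0\<^sub>v (dim_row M))"

definition stabilizer_code :: "nat \<Rightarrow> bit mat \<Rightarrow> bool" where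
  "stabilizer_code n H \<longleftrightarrow> dim_col H = 2 * n \<and> full_row_rank H \<and>
     H * Omega n * transpose_mat H = 0\<^sub>m (dim_row H) (dim_row H)"

definition num_logical :: "nat \<Rightarrow> bit mat \<Rightarrow> nat" where
  "num_logical n H = n - dim_row H"

definition logical_basis :: "nat \<Rightarrow> bit mat \<Rightarrow> bit mat \<Rightarrow> bit mat \<Rightarrow> bool" where
  "logical_basis n H QX QZ \<longleftrightarrow>
     (let k = num_logical n H in
      QX \<in> carrier_mat k (2 * n) \<and> QZ \<in> carrier_mat k (2 * n) \<and>
      H * Omega n * transpose_mat QX = 0\<^sub>m (dim_row H) k \<and>
      H * Omega n * transpose_mat QZ = 0\<^sub>m (dim_row H) k \<and>
      QX * Omega n * transpose_mat QX = 0\<^sub>m k k \<and>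
      QZ * Omega n * transpose_mat QZ = 0\<^sub>m k k \<and>
      QX * Omega n * transpose_mat QZ = 1\<^sub>m k)"

definition perm_mat :: "nat \<Rightarrow> (nat \<Rightarrow> nat) \<Rightarrow> bit mat" where
  "perm_mat n \<pi> = mat n n (\<lambda>(i, j). if \<pi> i = j then 1 else 0)"

definition dsum :: "bit mat \<Rightarrow> bit mat" where
  "dsum P = four_block_mat P (0\<^sub>m (dim_row P) (dim_col P)) (0\<^sub>m (dim_row P) (dim_col P)) P"

definition unit_mat :: "nat \<Rightarrow> nat \<Rightarrow> nat \<Rightarrow> bit mat" where
  "unit_mat k a b = mat k k (\<lambda>(i, j). if i = a \<and> j = b then 1 else 0)"

(* permutation matrix P implements logical CNOT circuit A (in GL(k,F_2)) in basis (QX,QZ);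
   A^{-T} is the transpose of the (unique) inverse B of A *)
definition implements ::
  "nat \<Rightarrow> bit mat \<Rightarrow> bit mat \<Rightarrow> bit mat \<Rightarrow> bit mat \<Rightarrow> bit mat \<Rightarrow> bool" where
  "implements n H QX QZ P A \<longleftrightarrow>
     (let k = num_logical n H in
      A \<in> carrier_mat k k \<and>
      rs (H * dsum P) = rs H \<and>
      (\<forall>i<k. row (QX * dsum P - A * QX) i \<in> rs H) \<and>
      (\<exists>B. B \<in> carrier_mat k k \<and> A * B = 1\<^sub>m k \<and> B * A = 1\<^sub>m k \<and>
           (\<forall>i<k. row (QZ * dsum P - transpose_mat B * QZ) i \<in> rs H)))"

definition phantom_wrt :: "nat \<Rightarrow> bit mat \<Rightarrow> bit mat \<Rightarrow> bit mat \<Rightarrow> bool" where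
  "phantom_wrt n H QX QZ \<longleftrightarrow>
     (let k = num_logical n H in
      \<forall>a<k. \<forall>b<k. a \<noteq> b \<longrightarrow>
        (\<exists>\<pi>. \<pi> permutes {..<n} \<and>
              implements n H QX QZ (perm_mat n \<pi>) (1\<^sub>m k + unit_mat k a b)))"

(* weight vector (w_X, w_Z, w_Y) of v = (x|z) \<in> F_2^{2n} *)
definition weight_vec :: "nat \<Rightarrow> bit vec \<Rightarrow> nat \<times> nat \<times> nat" where
  "weight_vec n v =
     (card {i. i < n \<and> v $ i = 1 \<and> v $ (n + i) = 0},
      card {i. i < n \<and> v $ i = 0 \<and> v $ (n + i) = 1},
      card {i. i < n \<and> v $ i = 1 \<and> v $ (n + i) = 1})"

definition coset :: "bit mat \<Rightarrow> bit mat \<Rightarrow> bit vec \<Rightarrow> bit vec set" where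
  "coset Q H c = {v. \<exists>s\<in>rs H. v = transpose_mat Q *\<^sub>v c + s}"

end

theory Submission
  imports Defs
begin

(* A qubit permutation implementing the logical CNOT A = I + E_ab preserves weight vectors and rs(H),
   and since Q_X diag(P, P) = A Q_X modulo rs(H) it maps the coset c Q_X + rs(H) injectively into
   (c A) Q_X + rs(H). So the number of vectors of a given weight can only grow from c to
   c A = c + c_a e_b; as this transvection is an involution, the two numbers agree. The transvections
   with a <> b connect all nonzero vectors of F_2^k (they shrink the support down to a unit vector, and
   e_a -> e_a + e_b -> e_b), so the number is the same for every nonzero c. For Q_Z the permutation
   implementing I + E_ba acts by its inverse transpose, which is again c -> c + c_a e_b. *)

(* Otherwise simp rewrites + and * on bit to XOR and AND, and sums of bits to cardinalities. *)
declare add_bit_eq_xor[simp del] mult_bit_eq_and[simp del]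

lemma UNIV_bit: "(UNIV :: bit set) = {0, 1}"
  using bit.exhaust by auto

instance bit :: finite
  by standard (simp add: UNIV_bit)

lemma finite_carrier_vec: "finite (carrier_vec m :: 'a::finite vec set)"
proof -
  have "carrier_vec m \<subseteq> vec_of_list ` {xs :: 'a list. set xs \<subseteq> UNIV \<and> length xs = m}"
  proof
    fix v :: "'a vec"
    assume "v \<in> carrier_vec m"
    then show "v \<in> vec_of_list ` {xs. set xs \<subseteq> UNIV \<and> length xs = m}"
      by (intro image_eqI[of _ _ "list_of_vec v"]) (auto simp: vec_list)
  qed
  then show ?thesis
    by (rule finite_subset) (intro finite_imageI finite_lists_length_eq finite_UNIV)
qed

section \<open>Qubit permutations\<close>

lemma perm_mat_carrier: "perm_mat n \<pi> \<in> carrier_mat n n"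
  unfolding perm_mat_def by simp

lemma dsum_carrier: "P \<in> carrier_mat m n \<Longrightarrow> dsum P \<in> carrier_mat (2 * m) (2 * n)"
  unfolding dsum_def by auto

lemma dsum_index:
  assumes "P \<in> carrier_mat n n" "l < 2 * n" "j < 2 * n"
  shows "dsum P $$ (l, j) =
    (if l < n \<and> j < n then P $$ (l, j) else if n \<le> l \<and> n \<le> j then P $$ (l - n, j - n) else 0)"
  using assms unfolding dsum_def by auto

lemma dsum_perm_mat_index:
  assumes \<pi>: "\<pi> permutes {..<n}" and l: "l < 2 * n" and i: "i < n"
  shows "dsum (perm_mat n \<pi>) $$ (l, \<pi> i) = (if l = i then 1 else 0)"
    and "dsum (perm_mat n \<pi>) $$ (l, n + \<pi> i) = (if l = n + i then 1 else 0)"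
proof -
  have \<pi>i: "\<pi> i < n" using permutes_in_image[OF \<pi>] i by simp
  have inj: "\<pi> x = \<pi> y \<longleftrightarrow> x = y" for x y
    using permutes_inj[OF \<pi>] by (auto dest: injD)
  have P: "perm_mat n \<pi> $$ (x, y) = (if \<pi> x = y then 1 else 0)" if "x < n" "y < n" for x y
    using that unfolding perm_mat_def by simp
  show "dsum (perm_mat n \<pi>) $$ (l, \<pi> i) = (if l = i then 1 else 0)"
    using l i \<pi>i by (simp add: dsum_index[OF perm_mat_carrier] P inj)
  show "dsum (perm_mat n \<pi>) $$ (l, n + \<pi> i) = (if l = n + i then 1 else 0)"
    using l i \<pi>i by (auto simp: dsum_index[OF perm_mat_carrier] P inj)
qed

lemma dsum_perm_mat_action:
  assumes \<pi>: "\<pi> permutes {..<n}" and v: "dim_vec v = 2 * n" and i: "i < n"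
  shows "(transpose_mat (dsum (perm_mat n \<pi>)) *\<^sub>v v) $ \<pi> i = v $ i"
    and "(transpose_mat (dsum (perm_mat n \<pi>)) *\<^sub>v v) $ (n + \<pi> i) = v $ (n + i)"
proof -
  have D: "dsum (perm_mat n \<pi>) \<in> carrier_mat (2 * n) (2 * n)"
    using dsum_carrier[OF perm_mat_carrier] .
  have entry: "(transpose_mat (dsum (perm_mat n \<pi>)) *\<^sub>v v) $ j
      = (\<Sum>l<2 * n. dsum (perm_mat n \<pi>) $$ (l, j) * v $ l)" if "j < 2 * n" for j
    using D v that by (simp add: scalar_prod_def lessThan_atLeast0)
  have "\<pi> i < n" using permutes_in_image[OF \<pi>] i by simp
  then have \<pi>i: "\<pi> i < 2 * n" "n + \<pi> i < 2 * n" by linarith+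
  have "(transpose_mat (dsum (perm_mat n \<pi>)) *\<^sub>v v) $ \<pi> i = (\<Sum>l<2 * n. if l = i then v $ l else 0)"
    unfolding entry[OF \<pi>i(1)]
    by (intro sum.cong) (simp_all add: dsum_perm_mat_index[OF \<pi> _ i])
  then show "(transpose_mat (dsum (perm_mat n \<pi>)) *\<^sub>v v) $ \<pi> i = v $ i"
    using i by simp
  have "(transpose_mat (dsum (perm_mat n \<pi>)) *\<^sub>v v) $ (n + \<pi> i) = (\<Sum>l<2 * n. if l = n + i then v $ l else 0)"
    unfolding entry[OF \<pi>i(2)]
    by (intro sum.cong) (simp_all add: dsum_perm_mat_index[OF \<pi> _ i])
  then show "(transpose_mat (dsum (perm_mat n \<pi>)) *\<^sub>v v) $ (n + \<pi> i) = v $ (n + i)"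
    using i by simp
qed

lemma card_qubits_perm_action:
  assumes \<pi>: "\<pi> permutes {..<n}" and v: "dim_vec v = 2 * n"
  shows "card {i. i < n \<and> R ((transpose_mat (dsum (perm_mat n \<pi>)) *\<^sub>v v) $ i)
                        ((transpose_mat (dsum (perm_mat n \<pi>)) *\<^sub>v v) $ (n + i))}
       = card {i. i < n \<and> R (v $ i) (v $ (n + i))}"
proof -
  let ?u = "transpose_mat (dsum (perm_mat n \<pi>)) *\<^sub>v v"
  have "{i. i < n \<and> R (?u $ i) (?u $ (n + i))} = \<pi> ` {i. i < n \<and> R (v $ i) (v $ (n + i))}"
  proof (intro equalityI subsetI)
    fix j
    assume j: "j \<in> {i. i < n \<and> R (?u $ i) (?u $ (n + i))}"
    then obtain i where "i < n" "j = \<pi> i"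
      using permutes_image[OF \<pi>] by (metis (no_types, lifting) imageE lessThan_iff mem_Collect_eq)
    then show "j \<in> \<pi> ` {i. i < n \<and> R (v $ i) (v $ (n + i))}"
      using j dsum_perm_mat_action[OF \<pi> v] by auto
  qed (use dsum_perm_mat_action[OF \<pi> v] permutes_in_image[OF \<pi>] in auto)
  then show ?thesis
    using card_image[OF inj_on_subset[OF permutes_inj[OF \<pi>] subset_UNIV]] by simp
qed

lemma weight_vec_perm_action:
  assumes "\<pi> permutes {..<n}" and "dim_vec v = 2 * n"
  shows "weight_vec n (transpose_mat (dsum (perm_mat n \<pi>)) *\<^sub>v v) = weight_vec n v"
  unfolding weight_vec_def
  using card_qubits_perm_action[OF assms, of "\<lambda>x y. x = a \<and> y = b" for a b] by simp

lemma inj_on_perm_action: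
  assumes \<pi>: "\<pi> permutes {..<n}"
  shows "inj_on (\<lambda>v. transpose_mat (dsum (perm_mat n \<pi>)) *\<^sub>v v) (carrier_vec (2 * n))"
proof (rule inj_onI)
  fix u v :: "bit vec"
  assume u: "u \<in> carrier_vec (2 * n)" and v: "v \<in> carrier_vec (2 * n)"
    and eq: "transpose_mat (dsum (perm_mat n \<pi>)) *\<^sub>v u = transpose_mat (dsum (perm_mat n \<pi>)) *\<^sub>v v"
  have qubit_eq: "u $ i = v $ i \<and> u $ (n + i) = v $ (n + i)" if "i < n" for i
    using dsum_perm_mat_action[OF \<pi> _ that] u v eq by (metis carrier_vecD)
  have "u $ j = v $ j" if "j < 2 * n" for j
  proof (cases "j < n")
    case False
    then have "j - n < n" "j = n + (j - n)"
      using that by linarith+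
    then show ?thesis
      using qubit_eq by metis
  qed (use qubit_eq in blast)
  then show "u = v"
    using u v by (intro eq_vecI) auto
qed

section \<open>Row spaces and cosets\<close>

lemma transpose_carrier_mat_self: "transpose_mat A \<in> carrier_mat (dim_col A) (dim_row A)"
  by (intro carrier_matI) simp_all

lemma rs_memI: "c \<in> carrier_vec (dim_row H) \<Longrightarrow> transpose_mat H *\<^sub>v c \<in> rs H"
  unfolding rs_def carrier_vec_def by blast

lemma rs_memE:
  assumes "x \<in> rs H"
  obtains c where "c \<in> carrier_vec (dim_row H)" "x = transpose_mat H *\<^sub>v c"
  using assms unfolding rs_def carrier_vec_def by blast

lemma rs_dim: "x \<in> rs H \<Longrightarrow> dim_vec x = dim_col H"
  by (erule rs_memE) simp

lemma rs_add:
  assumes "x \<in> rs H" "y \<in> rs H"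
  shows "x + y \<in> rs H"
proof -
  obtain a b where a: "a \<in> carrier_vec (dim_row H)" "x = transpose_mat H *\<^sub>v a"
    and b: "b \<in> carrier_vec (dim_row H)" "y = transpose_mat H *\<^sub>v b"
    using assms by (meson rs_memE)
  have "x + y = transpose_mat H *\<^sub>v (a + b)"
    unfolding a(2) b(2)
    by (rule mult_add_distrib_mat_vec[symmetric, OF transpose_carrier_mat_self a(1) b(1)])
  then show ?thesis
    using rs_memI[OF add_carrier_vec[OF a(1) b(1)]] by simp
qed

lemma rs_mult_right:
  assumes "s \<in> rs H" and D: "D \<in> carrier_mat (dim_col H) m"
  shows "transpose_mat D *\<^sub>v s \<in> rs (H * D)"
proof -
  obtain a where a: "a \<in> carrier_vec (dim_row H)" "s = transpose_mat H *\<^sub>v a"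
    using assms(1) by (rule rs_memE)
  have "transpose_mat D *\<^sub>v s = (transpose_mat D * transpose_mat H) *\<^sub>v a"
    unfolding a(2) using D
    by (intro assoc_mult_mat_vec[symmetric, OF _ transpose_carrier_mat_self a(1)]) simp
  also have "\<dots> = transpose_mat (H * D) *\<^sub>v a"
    using transpose_mult[OF carrier_matI[OF refl refl] D] by simp
  finally show ?thesis
    using rs_memI[of a "H * D"] a(1) by simp
qed

lemma rows_in_rs_factor:
  assumes M: "M \<in> carrier_mat k (dim_col H)" and rows: "\<forall>i<k. row M i \<in> rs H"
  obtains D where "D \<in> carrier_mat k (dim_row H)" "M = D * H"
proof -
  have "\<forall>i\<in>{..<k}. \<exists>d. d \<in> carrier_vec (dim_row H) \<and> row M i = transpose_mat H *\<^sub>v d"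
    using rows rs_memE by (metis lessThan_iff)
  then obtain d where d: "\<And>i. i < k \<Longrightarrow> d i \<in> carrier_vec (dim_row H)"
    and row_M: "\<And>i. i < k \<Longrightarrow> row M i = transpose_mat H *\<^sub>v d i"
    by (metis bchoice lessThan_iff)
  define D where "D = mat k (dim_row H) (\<lambda>(i, j). d i $ j)"
  have D: "D \<in> carrier_mat k (dim_row H)"
    unfolding D_def by simp
  have "row M i = row (D * H) i" if i: "i < k" for i
  proof (rule eq_vecI)
    fix j
    assume "j < dim_vec (row (D * H) i)"
    then have j: "j < dim_col H" by simp
    have row_D: "row D i = d i"
      using d[OF i] i unfolding D_def by (intro eq_vecI) auto
    have "row (D * H) i $ j = d i \<bullet> col H j"
      using i j carrier_matD[OF D] index_row(1)[of i "D * H" j] index_mult_mat(1)[of i D j H]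
      by (simp only: index_mult_mat(2,3) row_D)
    also have "\<dots> = col H j \<bullet> d i"
      using d[OF i] by (intro comm_scalar_prod) auto
    also have "\<dots> = row M i $ j"
      using j unfolding row_M[OF i]
      by (simp only: index_mult_mat_vec index_transpose_mat row_transpose)
    finally show "row M i $ j = row (D * H) i $ j"
      by (rule sym)
  qed (use carrier_matD[OF M] carrier_matD[OF D] in simp)
  then have "M = D * H"
    using M D by (intro eq_rowI) auto
  with D show thesis
    by (rule that)
qed

lemma rs_combination:
  assumes M: "M \<in> carrier_mat k (dim_col H)" and rows: "\<forall>i<k. row M i \<in> rs H"
    and c: "c \<in> carrier_vec k"
  shows "transpose_mat M *\<^sub>v c \<in> rs H"
proof -
  obtain D where D: "D \<in> carrier_mat k (dim_row H)" and "M = D * H"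
    using M rows by (rule rows_in_rs_factor)
  then have "transpose_mat M *\<^sub>v c = transpose_mat H *\<^sub>v (transpose_mat D *\<^sub>v c)"
    using transpose_mult[OF D carrier_matI[OF refl refl]] D c
    by (simp add: assoc_mult_mat_vec[OF transpose_carrier_mat_self _ c])
  moreover have "transpose_mat D *\<^sub>v c \<in> carrier_vec (dim_row H)"
    using carrier_matD(2)[OF D] by (intro carrier_vecI) simp
  ultimately show ?thesis
    using rs_memI by metis
qed

lemma coset_dim: "v \<in> coset Q H c \<Longrightarrow> dim_vec v = dim_col H"
  unfolding coset_def by (auto dest: rs_dim)

lemma coset_memI: "s \<in> rs H \<Longrightarrow> transpose_mat Q *\<^sub>v c + s \<in> coset Q H c"
  unfolding coset_def by blast

lemma add_eq_add_diff_add_vec: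
  fixes x y t :: "'a::ab_group_add vec"
  assumes "dim_vec x = n" "dim_vec y = n" "dim_vec t = n"
  shows "x + t = y + ((x - y) + t)"
  using assms by (intro eq_vecI) (simp_all add: algebra_simps)

lemma coset_mult_right:
  assumes D: "D \<in> carrier_mat (dim_col H) (dim_col H)" and Q: "Q \<in> carrier_mat k (dim_col H)"
    and A: "A \<in> carrier_mat k k" and rs_D: "rs (H * D) = rs H"
    and rows: "\<forall>i<k. row (Q * D - A * Q) i \<in> rs H"
    and c: "c \<in> carrier_vec k" and v: "v \<in> coset Q H c"
  shows "transpose_mat D *\<^sub>v v \<in> coset Q H (transpose_mat A *\<^sub>v c)"
proof -
  obtain s where s: "s \<in> rs H" and v_eq: "v = transpose_mat Q *\<^sub>v c + s"
    using v unfolding coset_def by auto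
  define X where "X = transpose_mat (Q * D) *\<^sub>v c"
  define Y where "Y = transpose_mat Q *\<^sub>v (transpose_mat A *\<^sub>v c)"
  define T where "T = transpose_mat D *\<^sub>v s"
  have QD: "Q * D \<in> carrier_mat k (dim_col H)" and AQ: "A * Q \<in> carrier_mat k (dim_col H)"
    using Q D A by (metis mult_carrier_mat)+
  have "transpose_mat (Q * D - A * Q) *\<^sub>v c = X - Y"
    unfolding X_def Y_def transpose_minus[OF QD AQ] transpose_mult[OF A Q]
    using c QD AQ A Q by (simp add: minus_mult_distrib_mat_vec[of _ "dim_col H" k])
  then have z: "X - Y \<in> rs H"
    using rs_combination[OF minus_carrier_mat[OF AQ] rows c] by simp
  have T: "T \<in> rs H"
    unfolding T_def using rs_mult_right[OF s D] rs_D by simp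
  have s_dim: "s \<in> carrier_vec (dim_col H)"
    using rs_dim[OF s] by (intro carrier_vecI)
  have DQ: "transpose_mat D *\<^sub>v (transpose_mat Q *\<^sub>v c) = X"
    unfolding X_def transpose_mult[OF Q D] using D Q c
    by (intro assoc_mult_mat_vec[symmetric, of _ "dim_col H" "dim_col H" _ k]) auto
  have "transpose_mat D *\<^sub>v v = X + T"
    unfolding v_eq T_def DQ[symmetric] using D Q c s_dim
    by (intro mult_add_distrib_mat_vec[of _ "dim_col H" "dim_col H"]) auto
  also have "\<dots> = Y + ((X - Y) + T)"
    using carrier_vecD[OF c] carrier_matD[OF D] carrier_matD[OF Q] carrier_matD[OF A] rs_dim[OF s]
    unfolding X_def Y_def T_def by (intro add_eq_add_diff_add_vec[of _ "dim_col H"]) simp_all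
  finally have "transpose_mat D *\<^sub>v v = Y + ((X - Y) + T)" .
  moreover have "Y + ((X - Y) + T) \<in> coset Q H (transpose_mat A *\<^sub>v c)"
    using coset_memI[OF rs_add[OF z T]] unfolding Y_def .
  ultimately show ?thesis
    by (simp only:)
qed

lemma card_coset_weight_le:
  assumes H: "dim_col H = 2 * n" and \<pi>: "\<pi> permutes {..<n}"
    and Q: "Q \<in> carrier_mat k (2 * n)" and A: "A \<in> carrier_mat k k"
    and rs_P: "rs (H * dsum (perm_mat n \<pi>)) = rs H"
    and rows: "\<forall>i<k. row (Q * dsum (perm_mat n \<pi>) - A * Q) i \<in> rs H"
    and c: "c \<in> carrier_vec k"
  shows "card {v \<in> coset Q H c. weight_vec n v = w}
    \<le> card {v \<in> coset Q H (transpose_mat A *\<^sub>v c). weight_vec n v = w}"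
proof (rule card_inj_on_le)
  let ?f = "\<lambda>v. transpose_mat (dsum (perm_mat n \<pi>)) *\<^sub>v v"
  have D: "dsum (perm_mat n \<pi>) \<in> carrier_mat (dim_col H) (dim_col H)"
    unfolding H by (rule dsum_carrier[OF perm_mat_carrier])
  have coset_carrier: "coset Q H c' \<subseteq> carrier_vec (2 * n)" for c'
    using coset_dim H by (metis carrier_vecI subsetI)
  show "inj_on ?f {v \<in> coset Q H c. weight_vec n v = w}"
    by (rule inj_on_subset[OF inj_on_perm_action[OF \<pi>]]) (use coset_carrier in blast)
  show "?f ` {v \<in> coset Q H c. weight_vec n v = w}
    \<subseteq> {v \<in> coset Q H (transpose_mat A *\<^sub>v c). weight_vec n v = w}"
  proof
    fix u
    assume "u \<in> ?f ` {v \<in> coset Q H c. weight_vec n v = w}"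
    then obtain v where v: "v \<in> coset Q H c" and wt: "weight_vec n v = w" and u: "u = ?f v"
      by blast
    have "v \<in> carrier_vec (2 * n)"
      using v coset_carrier by blast
    then have "u \<in> coset Q H (transpose_mat A *\<^sub>v c)" and "weight_vec n u = w"
      using coset_mult_right[OF D _ A rs_P rows c v] Q H weight_vec_perm_action[OF \<pi>] wt u by auto
    then show "u \<in> {v \<in> coset Q H (transpose_mat A *\<^sub>v c). weight_vec n v = w}"
      by blast
  qed
  show "finite {v \<in> coset Q H (transpose_mat A *\<^sub>v c). weight_vec n v = w}"
    by (rule finite_subset[OF _ finite_carrier_vec[of "2 * n"]]) (use coset_carrier in blast)
qed

section \<open>Transvections\<close>

(* The row vector c (I + E_ab) = c + c_a e_b. *)
definition transvection :: "nat \<Rightarrow> nat \<Rightarrow> bit vec \<Rightarrow> bit vec" where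
  "transvection a b c = vec (dim_vec c) (\<lambda>j. if j = b then c $ j + c $ a else c $ j)"

lemma dim_transvection [simp]: "dim_vec (transvection a b c) = dim_vec c"
  unfolding transvection_def by simp

lemma index_transvection:
  "j < dim_vec c \<Longrightarrow> transvection a b c $ j = (if j = b then c $ j + c $ a else c $ j)"
  unfolding transvection_def by simp

lemma transvection_transvection:
  assumes "a \<noteq> b" "a < dim_vec c"
  shows "transvection a b (transvection a b c) = c"
proof (rule eq_vecI)
  fix j
  assume "j < dim_vec c"
  moreover have "(x :: bit) + y + y = x" for x y
    by (cases y) simp_all
  ultimately show "transvection a b (transvection a b c) $ j = c $ j"
    using assms by (simp add: index_transvection)
qed simp

lemma transpose_unit_mat: "transpose_mat (unit_mat k a b) = unit_mat k b a"
  unfolding unit_mat_def by auto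

lemma transpose_one_plus_unit_mat_mult_vec:
  assumes "a < k" "b < k" "c \<in> carrier_vec k"
  shows "transpose_mat (1\<^sub>m k + unit_mat k a b) *\<^sub>v c = transvection a b c"
proof (rule eq_vecI)
  fix j
  assume "j < dim_vec (transvection a b c)"
  then have j: "j < k"
    using assms(3) by simp
  have "(transpose_mat (1\<^sub>m k + unit_mat k a b) *\<^sub>v c) $ j
      = (\<Sum>i<k. ((if i = j then 1 else 0) + (if i = a \<and> j = b then 1 else 0)) * c $ i)"
    using j assms(3) unfolding unit_mat_def by (simp add: scalar_prod_def lessThan_atLeast0)
  also have "\<dots> = (\<Sum>i<k. (if i = j then c $ i else 0) + (if j = b \<and> i = a then c $ i else 0))"
    by (intro sum.cong) (auto simp: distrib_right)
  also have "\<dots> = transvection a b c $ j"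
    using j assms by (simp add: sum.distrib index_transvection)
  finally show "(transpose_mat (1\<^sub>m k + unit_mat k a b) *\<^sub>v c) $ j = transvection a b c $ j" .
qed (use assms in \<open>simp add: unit_mat_def\<close>)

lemma one_plus_unit_mat_mult_vec:
  assumes "a < k" "b < k" "c \<in> carrier_vec k"
  shows "(1\<^sub>m k + unit_mat k a b) *\<^sub>v c = transvection b a c"
proof -
  have "unit_mat k b a \<in> carrier_mat k k"
    unfolding unit_mat_def by simp
  then have "transpose_mat (1\<^sub>m k + unit_mat k b a) = 1\<^sub>m k + unit_mat k a b"
    by (simp add: transpose_add[OF one_carrier_mat] transpose_unit_mat)
  then show ?thesis
    using transpose_one_plus_unit_mat_mult_vec[of b k a c] assms by simp
qed

lemma right_inverse_one_plus_unit_mat_mult_vec: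
  assumes ab: "a < k" "b < k" "a \<noteq> b"
    and A: "1\<^sub>m k + unit_mat k b a \<in> carrier_mat k k" and B: "B \<in> carrier_mat k k"
    and inverse: "(1\<^sub>m k + unit_mat k b a) * B = 1\<^sub>m k" and c: "c \<in> carrier_vec k"
  shows "B *\<^sub>v c = transvection a b c"
proof -
  have Bc: "B *\<^sub>v c \<in> carrier_vec k"
    using B c by (rule mult_mat_vec_carrier)
  have "transvection a b (B *\<^sub>v c) = (1\<^sub>m k + unit_mat k b a) *\<^sub>v (B *\<^sub>v c)"
    using one_plus_unit_mat_mult_vec[OF ab(2,1) Bc] by simp
  also have "\<dots> = c"
    unfolding assoc_mult_mat_vec[symmetric, OF A B c] inverse using c by simp
  finally show ?thesis
    using transvection_transvection[of a b "B *\<^sub>v c"] ab carrier_vecD[OF Bc] by simp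
qed

lemma transvection_invariant_unit_vec:
  assumes inv: "\<And>c a b. c \<in> carrier_vec k \<Longrightarrow> a < k \<Longrightarrow> b < k \<Longrightarrow> a \<noteq> b \<Longrightarrow>
      f (transvection a b c) = f c"
    and "c \<in> carrier_vec k" "c \<noteq> 0\<^sub>v k"
  shows "\<exists>a<k. f c = f (unit_vec k a)"
  using assms(2,3)
proof (induction "card {j. j < k \<and> c $ j = 1}" arbitrary: c rule: less_induct)
  case less
  obtain a where a: "a < k" "c $ a = 1"
    using less.prems by (metis bit_not_zero_iff carrier_vecD eq_vecI index_zero_vec)
  show ?case
  proof (cases "\<exists>b<k. b \<noteq> a \<and> c $ b = 1")
    case True
    then obtain b where b: "b < k" "b \<noteq> a" "c $ b = 1"
      by blast
    let ?c = "transvection a b c"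
    have c_dim: "?c \<in> carrier_vec k"
      using carrier_vecD[OF less.prems(1)] by (intro carrier_vecI) simp
    have "{j. j < k \<and> ?c $ j = 1} = {j. j < k \<and> c $ j = 1} - {b}"
      using carrier_vecD[OF less.prems(1)] a b
      by (auto simp: index_transvection one_add_one split: if_splits)
    then have "card {j. j < k \<and> ?c $ j = 1} < card {j. j < k \<and> c $ j = 1}"
      using b by (simp only:) (intro card_Diff1_less; simp)
    moreover have "?c \<noteq> 0\<^sub>v k"
      using less.prems(1) a b by (metis carrier_vecD index_transvection index_zero_vec(1) zero_neq_one)
    ultimately obtain a' where "a' < k" "f ?c = f (unit_vec k a')"
      using less.hyps c_dim by blast
    then show ?thesis
      using inv[OF less.prems(1) a(1) b(1) b(2)[symmetric]] by metis
  next
    case False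
    then have "c = unit_vec k a"
      using carrier_vecD[OF less.prems(1)] a by (intro eq_vecI) auto
    then show ?thesis
      using a(1) by blast
  qed
qed

lemma transvection_invariant_unit_vecs_eq:
  assumes inv: "\<And>c a b. c \<in> carrier_vec k \<Longrightarrow> a < k \<Longrightarrow> b < k \<Longrightarrow> a \<noteq> b \<Longrightarrow>
      f (transvection a b c) = f c"
    and "a < k" "b < k"
  shows "f (unit_vec k a) = f (unit_vec k b)"
proof (cases "a = b")
  case False
  let ?u = "transvection a b (unit_vec k a)"
  have "transvection b a ?u = unit_vec k b"
    using assms(2,3) False by (intro eq_vecI) (auto simp: index_transvection)
  moreover have "?u \<in> carrier_vec k"
    by (intro carrier_vecI) simp
  ultimately show ?thesis
    using inv[of "unit_vec k a" a b] inv[of ?u b a] assms(2,3) False by simp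
qed simp

lemma transvection_invariant_eq:
  assumes inv: "\<And>c a b. c \<in> carrier_vec k \<Longrightarrow> a < k \<Longrightarrow> b < k \<Longrightarrow> a \<noteq> b \<Longrightarrow>
      f (transvection a b c) = f c"
    and "c \<in> carrier_vec k" "c \<noteq> 0\<^sub>v k" "c' \<in> carrier_vec k" "c' \<noteq> 0\<^sub>v k"
  shows "f c = f c'"
proof -
  have unit: "\<exists>a<k. f x = f (unit_vec k a)" if "x \<in> carrier_vec k" "x \<noteq> 0\<^sub>v k" for x
    using inv that by (rule transvection_invariant_unit_vec)
  have units: "f (unit_vec k a) = f (unit_vec k a')" if "a < k" "a' < k" for a a'
    using inv that by (rule transvection_invariant_unit_vecs_eq)
  show ?thesis
    using unit[OF assms(2,3)] unit[OF assms(4,5)] units by metis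
qed

section \<open>Phantom codes\<close>

lemma phantom_card_coset_weight_le:
  assumes code: "stabilizer_code n H" and basis: "logical_basis n H QX QZ"
    and phantom: "phantom_wrt n H QX QZ"
    and c: "c \<in> carrier_vec (num_logical n H)"
    and ab: "a < num_logical n H" "b < num_logical n H" "a \<noteq> b"
  shows "card {v \<in> coset QX H c. weight_vec n v = w}
      \<le> card {v \<in> coset QX H (transvection a b c). weight_vec n v = w}"
    and "card {v \<in> coset QZ H c. weight_vec n v = w}
      \<le> card {v \<in> coset QZ H (transvection a b c). weight_vec n v = w}"
proof -
  define k where "k = num_logical n H"
  note c = c[folded k_def] and ab = ab[folded k_def]
  have H: "dim_col H = 2 * n"
    using code unfolding stabilizer_code_def by simp
  have QX: "QX \<in> carrier_mat k (2 * n)" and QZ: "QZ \<in> carrier_mat k (2 * n)"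
    using basis unfolding logical_basis_def Let_def k_def by auto
  have cnot: "\<exists>\<pi>. \<pi> permutes {..<n} \<and> implements n H QX QZ (perm_mat n \<pi>) (1\<^sub>m k + unit_mat k x y)"
    if "x < k" "y < k" "x \<noteq> y" for x y
    using phantom that unfolding phantom_wrt_def Let_def k_def by blast
  obtain \<pi> where \<pi>: "\<pi> permutes {..<n}"
    and "implements n H QX QZ (perm_mat n \<pi>) (1\<^sub>m k + unit_mat k a b)"
    using cnot ab by blast
  then have A: "1\<^sub>m k + unit_mat k a b \<in> carrier_mat k k"
    and rs_P: "rs (H * dsum (perm_mat n \<pi>)) = rs H"
    and rows: "\<forall>i<k. row (QX * dsum (perm_mat n \<pi>) - (1\<^sub>m k + unit_mat k a b) * QX) i \<in> rs H"
    unfolding implements_def Let_def k_def by auto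
  show "card {v \<in> coset QX H c. weight_vec n v = w}
      \<le> card {v \<in> coset QX H (transvection a b c). weight_vec n v = w}"
    using card_coset_weight_le[OF H \<pi> QX A rs_P rows c]
    unfolding transpose_one_plus_unit_mat_mult_vec[OF ab(1,2) c] .
  obtain \<sigma> where \<sigma>: "\<sigma> permutes {..<n}"
    and "implements n H QX QZ (perm_mat n \<sigma>) (1\<^sub>m k + unit_mat k b a)"
    using cnot ab by metis
  then obtain B where A': "1\<^sub>m k + unit_mat k b a \<in> carrier_mat k k"
    and B: "B \<in> carrier_mat k k" and inverse: "(1\<^sub>m k + unit_mat k b a) * B = 1\<^sub>m k"
    and rs_S: "rs (H * dsum (perm_mat n \<sigma>)) = rs H"
    and rows: "\<forall>i<k. row (QZ * dsum (perm_mat n \<sigma>) - transpose_mat B * QZ) i \<in> rs H"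
    unfolding implements_def Let_def k_def by auto
  have "B *\<^sub>v c = transvection a b c"
    using ab A' B inverse c by (rule right_inverse_one_plus_unit_mat_mult_vec)
  then show "card {v \<in> coset QZ H c. weight_vec n v = w}
      \<le> card {v \<in> coset QZ H (transvection a b c). weight_vec n v = w}"
    using card_coset_weight_le[OF H \<sigma> QZ _ rs_S rows c] B by simp
qed

lemma phantom_card_coset_weight_transvection:
  assumes code: "stabilizer_code n H" and basis: "logical_basis n H QX QZ"
    and phantom: "phantom_wrt n H QX QZ"
    and c: "c \<in> carrier_vec (num_logical n H)"
    and ab: "a < num_logical n H" "b < num_logical n H" "a \<noteq> b"
  shows "card {v \<in> coset QX H (transvection a b c). weight_vec n v = w}
      = card {v \<in> coset QX H c. weight_vec n v = w}"
    and "card {v \<in> coset QZ H (transvection a b c). weight_vec n v = w}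
      = card {v \<in> coset QZ H c. weight_vec n v = w}"
proof -
  have "transvection a b c \<in> carrier_vec (num_logical n H)"
    using c by (intro carrier_vecI) (simp add: carrier_vecD)
  note le_back = phantom_card_coset_weight_le[OF code basis phantom this ab, of w]
  have "transvection a b (transvection a b c) = c"
    using c ab by (intro transvection_transvection) (simp_all add: carrier_vecD)
  then show "card {v \<in> coset QX H (transvection a b c). weight_vec n v = w}
      = card {v \<in> coset QX H c. weight_vec n v = w}"
    and "card {v \<in> coset QZ H (transvection a b c). weight_vec n v = w}
      = card {v \<in> coset QZ H c. weight_vec n v = w}"
    using le_back phantom_card_coset_weight_le[OF code basis phantom c ab, of w] by simp_all
qed

theorem mainTheorem3:
  fixes n :: nat and H QX QZ :: "bit mat"
  assumes "stabilizer_code n H"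
    and "logical_basis n H QX QZ"
    and "phantom_wrt n H QX QZ"
  shows "\<forall>w c c'. dim_vec c = num_logical n H \<and> c \<noteq> 0\<^sub>v (num_logical n H) \<and>
             dim_vec c' = num_logical n H \<and> c' \<noteq> 0\<^sub>v (num_logical n H) \<longrightarrow>
           card {v \<in> coset QX H c. weight_vec n v = w} = card {v \<in> coset QX H c'. weight_vec n v = w}
         \<and> card {v \<in> coset QZ H c. weight_vec n v = w} = card {v \<in> coset QZ H c'. weight_vec n v = w}"
proof (intro allI impI)
  fix w and c c' :: "bit vec"
  let ?k = "num_logical n H"
  assume "dim_vec c = ?k \<and> c \<noteq> 0\<^sub>v ?k \<and> dim_vec c' = ?k \<and> c' \<noteq> 0\<^sub>v ?k"
  then have c: "c \<in> carrier_vec ?k" "c \<noteq> 0\<^sub>v ?k" "c' \<in> carrier_vec ?k" "c' \<noteq> 0\<^sub>v ?k"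
    by (auto intro: carrier_vecI)
  have "card {v \<in> coset QX H c. weight_vec n v = w} = card {v \<in> coset QX H c'. weight_vec n v = w}"
    by (rule transvection_invariant_eq[where k = ?k])
      (use phantom_card_coset_weight_transvection(1)[OF assms] c in simp_all)
  moreover have "card {v \<in> coset QZ H c. weight_vec n v = w} = card {v \<in> coset QZ H c'. weight_vec n v = w}"
    by (rule transvection_invariant_eq[where k = ?k])
      (use phantom_card_coset_weight_transvection(2)[OF assms] c in simp_all)
  ultimately show "card {v \<in> coset QX H c. weight_vec n v = w} = card {v \<in> coset QX H c'. weight_vec n v = w}
         \<and> card {v \<in> coset QZ H c. weight_vec n v = w} = card {v \<in> coset QZ H c'. weight_vec n v = w}" ..
qed

end
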